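(* Let $u\in\mathbb{S}^{d-1}$, $\theta>0$, $0<\tilde c,\zeta<1$, and $b=\frac{\tilde c\zeta\theta}{\sqrt d}\le 1$. Let $w_t\in\mathbb{S}^{d-1}$ with $\theta_t:=\theta(w_t,u)\le\frac53\theta$, and let $(x_t,y_t)\in\mathbb{S}^{d-1}\times\{-1,+1\}$ be any labeled example with $w_t\cdot x_t\in[\frac b2,b]$ (e.g. drawn from $D$ conditioned on this event). Define $w_{t+1}=w_t-2\,\mathbb{1}\{y_t\,w_t\cdot x_t<0\}(w_t\cdot x_t)x_t$ and $\theta_{t+1}=\theta(w_{t+1},u)$. Then $|\cos\theta_{t+1}-\cos\theta_t|\le\frac{16\tilde c\zeta\theta^2}{3\sqrt d}$.
   Context: $\mathbb{S}^{d-1}$ is the unit sphere in $\mathbb{R}^d$; $\theta(v_1,v_2)=\arccos(v_1\cdot v_2)$ for unit vectors. (The update preserves unit norm.) *)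

theory Defs
  imports "HOL-Analysis.Analysis"
begin

definition ang :: "'a::euclidean_space \<Rightarrow> 'a \<Rightarrow> real" where
  "ang v1 v2 = arccos (v1 \<bullet> v2)"

definition upd :: "'a::euclidean_space \<Rightarrow> 'a \<Rightarrow> real \<Rightarrow> 'a" where
  "upd w x y = w - (2 * (if y * (w \<bullet> x) < 0 then 1 else 0) * (w \<bullet> x)) *\<^sub>R x"

end

theory Submission
  imports Defs
begin

text \<open>The update either leaves \<open>w\<close> alone or reflects it in the hyperplane \<open>x\<^sup>\<perp>\<close>, so
  \<open>w\<^sub>t\<^sub>+\<^sub>1 = w\<^sub>t - k x\<^sub>t\<close> with \<open>0 \<le> k \<le> 2 (w\<^sub>t \<cdot> x\<^sub>t) \<le> 2b\<close> and \<open>\<bar>cos \<theta>\<^sub>t\<^sub>+\<^sub>1 - cos \<theta>\<^sub>t\<bar> = k \<bar>x\<^sub>t \<cdot> u\<bar>\<close>.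
  Since the chord \<open>\<parallel>w\<^sub>t - u\<parallel>\<close> is at most the angle \<open>\<theta>\<^sub>t \<le> 5\<theta>/3\<close>, we get
  \<open>\<bar>x\<^sub>t \<cdot> u\<bar> \<le> \<bar>x\<^sub>t \<cdot> w\<^sub>t\<bar> + \<parallel>w\<^sub>t - u\<parallel> \<le> b + 5\<theta>/3 \<le> 8\<theta>/3\<close>, and the bound is \<open>2b \<cdot> 8\<theta>/3\<close>.\<close>

lemma one_minus_cos_le: "1 - cos (t::real) \<le> t\<^sup>2 / 2"
proof -
  have "1 - cos t = 2 * (sin (t/2))\<^sup>2"
    using cos_double_sin[of "t/2"] by simp
  moreover have "(sin (t/2))\<^sup>2 \<le> (t/2)\<^sup>2"
    by (metis abs_ge_zero abs_sin_x_le_abs_x power2_abs power_mono)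
  ultimately show ?thesis by (simp add: power_divide)
qed

lemma abs_inner_unit_le_1:
  fixes v w :: "'a::euclidean_space"
  assumes "norm v = 1" "norm w = 1"
  shows "\<bar>v \<bullet> w\<bar> \<le> 1"
  using Cauchy_Schwarz_ineq2[of v w] assms by simp

lemma cos_ang_unit:
  fixes v w :: "'a::euclidean_space"
  assumes "norm v = 1" "norm w = 1"
  shows "cos (ang v w) = v \<bullet> w"
  using abs_inner_unit_le_1[OF assms] unfolding ang_def by simp

lemma norm_diff_le_ang:
  fixes v w :: "'a::euclidean_space"
  assumes "norm v = 1" "norm w = 1"
  shows "norm (v - w) \<le> ang v w"
proof (rule power2_le_imp_le)
  have "(norm (v - w))\<^sup>2 = v \<bullet> v - 2 * (v \<bullet> w) + w \<bullet> w"
    by (simp add: power2_norm_eq_inner inner_diff_left inner_diff_right inner_commute)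
  also have "\<dots> = 2 - 2 * (v \<bullet> w)"
    using assms by (simp add: dot_square_norm)
  also have "\<dots> \<le> (ang v w)\<^sup>2"
    using one_minus_cos_le[of "ang v w"] cos_ang_unit[OF assms] by simp
  finally show "(norm (v - w))\<^sup>2 \<le> (ang v w)\<^sup>2" .
  show "0 \<le> ang v w"
    using abs_inner_unit_le_1[OF assms] unfolding ang_def by (simp add: arccos_lbound)
qed

lemma upd_eq_diff_scaleR:
  fixes w x :: "'a::euclidean_space"
  obtains k where "upd w x y = w - k *\<^sub>R x" "k * k = 2 * k * (w \<bullet> x)"
    "w \<bullet> x \<ge> 0 \<Longrightarrow> 0 \<le> k \<and> k \<le> 2 * (w \<bullet> x)"
proof -
  let ?k = "2 * (if y * (w \<bullet> x) < 0 then 1 else 0) * (w \<bullet> x)"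
  have "upd w x y = w - ?k *\<^sub>R x" "?k * ?k = 2 * ?k * (w \<bullet> x)"
    "w \<bullet> x \<ge> 0 \<Longrightarrow> 0 \<le> ?k \<and> ?k \<le> 2 * (w \<bullet> x)"
    by (simp_all add: upd_def)
  then show thesis
    using that by blast
qed

lemma norm_upd:
  fixes w x :: "'a::euclidean_space"
  assumes "norm x = 1"
  shows "norm (upd w x y) = norm w"
proof -
  obtain k where k: "upd w x y = w - k *\<^sub>R x" "k * k = 2 * k * (w \<bullet> x)"
    using upd_eq_diff_scaleR by blast
  have "(w - k *\<^sub>R x) \<bullet> (w - k *\<^sub>R x) = w \<bullet> w - 2 * k * (w \<bullet> x) + k * k * (x \<bullet> x)"
    by (simp add: inner_diff_left inner_diff_right inner_commute algebra_simps)
  also have "\<dots> = w \<bullet> w"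
    using assms k(2) by (simp add: dot_square_norm)
  finally show ?thesis
    using k(1) by (simp add: norm_eq_sqrt_inner)
qed

lemma abs_cos_ang_upd_diff:
  fixes u w x :: "'a::euclidean_space"
  assumes "norm u = 1" "norm w = 1" "norm x = 1" "0 \<le> w \<bullet> x"
  shows "\<bar>cos (ang (upd w x y) u) - cos (ang w u)\<bar> \<le> 2 * (w \<bullet> x) * \<bar>x \<bullet> u\<bar>"
proof -
  obtain k where k: "upd w x y = w - k *\<^sub>R x" "0 \<le> k" "k \<le> 2 * (w \<bullet> x)"
    using upd_eq_diff_scaleR assms(4) by metis
  have "norm (upd w x y) = 1"
    using norm_upd[OF assms(3)] assms(2) by simp
  then have "\<bar>cos (ang (upd w x y) u) - cos (ang w u)\<bar> = k * \<bar>x \<bullet> u\<bar>"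
    using k(1,2) assms by (simp add: cos_ang_unit inner_diff_left abs_mult)
  also have "\<dots> \<le> 2 * (w \<bullet> x) * \<bar>x \<bullet> u\<bar>"
    using k(3) by (simp add: mult_right_mono)
  finally show ?thesis .
qed

lemma abs_inner_le_ang:
  fixes u w x :: "'a::euclidean_space"
  assumes "norm u = 1" "norm w = 1" "norm x = 1"
  shows "\<bar>x \<bullet> u\<bar> \<le> \<bar>w \<bullet> x\<bar> + ang w u"
proof -
  have "\<bar>x \<bullet> (w - u)\<bar> \<le> norm (w - u)"
    using Cauchy_Schwarz_ineq2[of x "w - u"] assms(3) by simp
  then show ?thesis
    using norm_diff_le_ang[OF assms(2,1)]
    by (simp add: inner_diff_right inner_commute)
qed

theorem lemma6:
  fixes u w x :: "'a::euclidean_space" and y \<theta> c \<zeta> b :: real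
  assumes "norm u = 1"
    and "\<theta> > 0" and "0 < c" and "c < 1" and "0 < \<zeta>" and "\<zeta> < 1"
    and "b = c * \<zeta> * \<theta> / sqrt (real DIM('a))" and "b \<le> 1"
    and "norm w = 1" and "ang w u \<le> 5 / 3 * \<theta>"
    and "norm x = 1" and "y \<in> {-1, 1}"
    and "b / 2 \<le> w \<bullet> x" and "w \<bullet> x \<le> b"
  shows "\<bar>cos (ang (upd w x y) u) - cos (ang w u)\<bar>
           \<le> 16 * c * \<zeta> * \<theta>^2 / (3 * sqrt (real DIM('a)))"
proof -
  have sqrt_dim: "sqrt (real DIM('a)) \<ge> 1"
    using DIM_positive[where 'a='a] by simp
  have b_pos: "0 < b"
    using assms(2,3,5,7) sqrt_dim by simp
  have "b \<le> c * \<zeta> * \<theta> / 1"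
    unfolding assms(7) using assms(2,3,5) sqrt_dim
    by (intro divide_left_mono) auto
  also have "\<dots> \<le> 1 * \<theta>"
    using assms(2-6) by (simp only: div_by_1, intro mult_right_mono mult_le_one) auto
  finally have b_le: "b \<le> \<theta>"
    by simp
  have x_u: "\<bar>x \<bullet> u\<bar> \<le> 8/3 * \<theta>"
    using abs_inner_le_ang[OF assms(1,9,11)] assms(10,13,14) b_pos b_le by simp
  have "\<bar>cos (ang (upd w x y) u) - cos (ang w u)\<bar> \<le> 2 * (w \<bullet> x) * \<bar>x \<bullet> u\<bar>"
    using abs_cos_ang_upd_diff[OF assms(1,9,11)] assms(13) b_pos by simp
  also have "\<dots> \<le> 2 * b * (8/3 * \<theta>)"
    using assms(13,14) b_pos x_u by (intro mult_mono) auto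
  also have "\<dots> = 16 * c * \<zeta> * \<theta>^2 / (3 * sqrt (real DIM('a)))"
    using assms(7) by (simp add: power2_eq_square)
  finally show ?thesis .
qed

end
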